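(* Let $k\ge 1$, $0\le r<k$ and $n\ge1$ be integers, and let $$B_n(k,r,x;q)=\left(\begin{bmatrix} i-k+r+1\\ i-j\end{bmatrix}_q x^k+q^{(k-1)j}\begin{bmatrix} i+r+1\\ i-j+1\end{bmatrix}_q\right)_{i,j=0}^{n-1}.$$ Then $x^r\det B_n(k,r,x;q)=F^{(k)}_{kn+r}(x;q)$.
   Context: Here $q$ is an indeterminate and all quantities lie in $\mathbb{Q}(q)[x]$. The $q$-binomial coefficient is defined for integers $m$ (possibly negative) and $j$ by $\begin{bmatrix} m\\ j\end{bmatrix}_q=\prod_{t=0}^{j-1}\frac{1-q^{m-t}}{1-q^{t+1}}$ if $j\ge0$ and $0$ if $j<0$. For an integer $k\ge1$, the $q$-Fibonacci polynomials $F^{(k)}_n(x;q)$ ($n\ge0$) are defined by $F^{(k)}_n(x;q)=x^n$ for $0\le n<k$ and $F^{(k)}_{n+k}(x;q)=xF^{(k)}_{n+k-1}(x;q)+q^nF^{(k)}_n(x;q)$ for $n\ge0$. *)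

theory Defs
  imports "Jordan_Normal_Form.Determinant" "HOL-Computational_Algebra.Fraction_Field"
    "HOL-Computational_Algebra.Polynomial"
begin

definition qbinom :: "'a::field \<Rightarrow> int \<Rightarrow> int \<Rightarrow> 'a" where
  "qbinom q m j = (if j < 0 then 0 else
     (\<Prod>t<nat j. (1 - q powi (m - int t)) / (1 - q ^ (t + 1))))"

function qfib :: "nat \<Rightarrow> 'a::comm_ring_1 \<Rightarrow> 'a \<Rightarrow> nat \<Rightarrow> 'a" where
  "qfib k q x n = (if n < k \<or> k = 0 then x ^ n
      else x * qfib k q x (n - 1) + q ^ (n - k) * qfib k q x (n - k))"
  by auto
termination by (relation "measure (\<lambda>(k,q,x,n). n)") auto

definition qq :: "rat poly fract" where "qq = Fract [:0, 1:] 1"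

definition xx :: "rat poly fract poly" where "xx = [:0, 1:]"

end

theory Submission
  imports Defs
begin

text \<open>
  Expanding the recurrence gives F_n = \<Sum>_l q^(k C(l,2)) [n-(k-1)l, l]_q x^(n-kl).
  With the weights \<omega>_j = (-1)^j q^(-(k-1) C(j+1,2)), the vector w_j = \<omega>_j F_(kj+r) is
  annihilated by every row of the lower Hessenberg matrix B: after expanding each F, the
  q-Vandermonde identity (with one upper index negated) sums the coefficient of every power of x
  in closed form, and the x^k-part and the constant part of a row turn out to be the same
  polynomial with opposite signs. For a lower Hessenberg matrix with such a kernel vector, Laplace
  expansion gives w_0 det B = (-1)^n w_n \<Prod>_i b_(i,i+1); here w_0 = x^r, and the
  superdiagonal product q^((k-1) C(n+1,2)) cancels \<omega>_n.
\<close>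

fun triangular :: "nat \<Rightarrow> int" where
  "triangular 0 = 0"
| "triangular (Suc n) = triangular n + int n"

lemma triangular_add: "triangular (a + b) = triangular a + triangular b + int a * int b"
  by (induction b) (auto simp: algebra_simps)

lemma two_triangular: "2 * triangular n = int n * (int n - 1)"
  by (induction n) (auto simp: algebra_simps)

lemma smult_sum_right: "smult a (\<Sum>i\<in>S. f i) = (\<Sum>i\<in>S. smult a (f i))"
  by (induction S rule: infinite_finite_induct) (auto simp: smult_add_right)

lemma sum_atMost_triangle_reindex:
  "(\<Sum>j\<le>(N::nat). \<Sum>l\<le>j. h j l) = (\<Sum>t\<le>N. \<Sum>l\<le>N - t. h (t + l) l)"
proof -
  have "(\<Sum>j\<le>N. \<Sum>l\<le>j. h j l) = (\<Sum>(j, l)\<in>Sigma {..N} (\<lambda>j. {..j}). h j l)"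
    by (subst sum.Sigma) auto
  also have "\<dots> = (\<Sum>(t, l)\<in>Sigma {..N} (\<lambda>t. {..N - t}). h (t + l) l)"
    by (rule sum.reindex_bij_witness[where i = "\<lambda>(t, l). (t + l, l)" and j = "\<lambda>(j, l). (j - l, l)"]) auto
  also have "\<dots> = (\<Sum>t\<le>N. \<Sum>l\<le>N - t. h (t + l) l)"
    by (subst sum.Sigma) auto
  finally show ?thesis .
qed

lemma det_mat_lower_triangular:
  assumes "\<And>i j. i < j \<Longrightarrow> j < n \<Longrightarrow> f (i, j) = 0"
  shows "det (mat n n f) = (\<Prod>i<n. f (i, i))"
proof -
  have "det (mat n n f) = prod_list (diag_mat (mat n n f))"
    using assms by (intro det_lower_triangular[of n]) auto
  also have "\<dots> = prod_list (map (\<lambda>i. f (i, i)) [0..<n])"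
    unfolding diag_mat_def by (intro arg_cong[where f = prod_list] map_cong) auto
  also have "\<dots> = (\<Prod>i<n. f (i, i))"
    by (simp add: prod.list_conv_set_nth atLeast0LessThan)
  finally show ?thesis .
qed

lemma det_identity_first_column:
  "det (mat (Suc m) (Suc m) (\<lambda>(i, j). if j = 0 then w i else if i = j then 1 else 0)) = (w 0 :: 'a::comm_ring_1)"
proof -
  have "det (mat (Suc m) (Suc m) (\<lambda>(i, j). if j = 0 then w i else if i = j then 1 else 0))
      = (\<Prod>i<Suc m. if i = 0 then w 0 else (1 :: 'a))"
    by (subst det_mat_lower_triangular, force) (rule prod.cong; simp)
  then show ?thesis
    by (simp only: prod.lessThan_Suc_shift) simp
qed

lemma mat_mult_identity_first_column:
  fixes B :: "'a::comm_ring_1 mat"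
  assumes "B \<in> carrier_mat n n" and "i < n" and "j < n"
  shows "(B * mat n n (\<lambda>(i, j). if j = 0 then w i else if i = j then 1 else 0)) $$ (i, j)
       = (if j = 0 then (\<Sum>l<n. B $$ (i, l) * w l) else B $$ (i, j))"
proof (cases "j = 0")
  case True
  then show ?thesis
    using assms by (auto simp: scalar_prod_def atLeast0LessThan intro!: sum.cong)
next
  case False
  then have "(B * mat n n (\<lambda>(i, j). if j = 0 then w i else if i = j then 1 else 0)) $$ (i, j)
      = (\<Sum>l\<in>{0..<n}. B $$ (i, l) * (if l = j then 1 else 0))"
    using assms by (auto simp: scalar_prod_def intro!: sum.cong)
  then show ?thesis
    using assms False by (simp add: if_distrib cong: if_cong)
qed

text \<open>
  Multiplying B by the identity with its first column replaced by w kills the first column except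
  in the last row; Laplace expansion along it leaves a lower triangular minor.
\<close>

lemma det_hessenberg_kernel:
  fixes b :: "nat \<Rightarrow> nat \<Rightarrow> 'a::comm_ring_1" and w :: "nat \<Rightarrow> 'a"
  assumes upper: "\<And>i j. Suc i < j \<Longrightarrow> b i j = 0"
    and kernel: "\<And>i. i < n \<Longrightarrow> (\<Sum>j\<le>Suc i. b i j * w j) = 0"
  shows "w 0 * det (mat n n (\<lambda>(i, j). b i j)) = (-1) ^ n * w n * (\<Prod>i<n. b i (Suc i))"
proof (cases n)
  case 0
  then show ?thesis by simp
next
  case (Suc m)
  define B where "B = mat n n (\<lambda>(i, j). b i j)"
  define U where "U = mat n n (\<lambda>(i, j). if j = 0 then w i else if i = j then 1 else 0)"
  define C where "C = B * U"
  have B: "B \<in> carrier_mat n n" and U: "U \<in> carrier_mat n n"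
    by (simp_all add: B_def U_def)
  then have C: "C \<in> carrier_mat n n"
    unfolding C_def by (rule mult_carrier_mat)
  have det_U: "det U = w 0"
    unfolding U_def Suc by (rule det_identity_first_column)
  have C_index: "C $$ (i, j) = (if j = 0 then (\<Sum>l<n. b i l * w l) else b i j)" if "i < n" "j < n" for i j
    using mat_mult_identity_first_column[OF B that] that by (simp add: C_def U_def B_def)
  have C_first: "C $$ (i, 0) = - (b i n * w n)" if i: "i < n" for i
  proof -
    have "(\<Sum>j\<le>n. b i j * w j) = (\<Sum>j\<le>Suc i. b i j * w j)"
      using i by (intro sum.mono_neutral_right) (auto simp: upper)
    then have "(\<Sum>j<n. b i j * w j) + b i n * w n = 0"
      using kernel[OF i] by (simp add: lessThan_Suc_atMost[symmetric])
    then show ?thesis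
      using i Suc by (simp add: C_index eq_neg_iff_add_eq_0)
  qed
  have minor: "mat_delete C m 0 = mat m m (\<lambda>(i, j). b i (Suc j))"
    using C Suc by (auto simp: mat_delete_def C_index)
  have "det C = (\<Sum>i<n. C $$ (i, 0) * cofactor C i 0)"
    using C Suc by (intro laplace_expansion_column) auto
  also have "\<dots> = C $$ (m, 0) * cofactor C m 0"
    unfolding Suc lessThan_Suc using C_first Suc upper by simp
  also have "\<dots> = - (b m n * w n) * ((-1) ^ m * (\<Prod>i<m. b i (Suc i)))"
    unfolding cofactor_def minor using C_first[of m] Suc upper
    by (subst det_mat_lower_triangular) auto
  also have "\<dots> = (-1) ^ n * w n * (\<Prod>i<n. b i (Suc i))"
    unfolding Suc by (simp add: algebra_simps)
  finally have "det C = (-1) ^ n * w n * (\<Prod>i<n. b i (Suc i))" .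
  moreover have "det C = det B * w 0"
    unfolding C_def det_mult[OF B U] det_U ..
  ultimately show ?thesis
    unfolding B_def by (simp add: mult.commute)
qed

lemma qbinom_neg_index [simp]: "j < 0 \<Longrightarrow> qbinom q M j = 0"
  unfolding qbinom_def by simp

lemma qbinom_0 [simp]: "qbinom q M 0 = 1"
  unfolding qbinom_def by simp

lemma qbinom_nat_index:
  "qbinom q M (int l) = (\<Prod>t<l. 1 - q powi (M - int t)) / (\<Prod>t<l. 1 - q ^ Suc t)"
  unfolding qbinom_def by (simp add: prod_dividef)

lemma qbinom_Suc:
  "qbinom q M (int (Suc l)) = qbinom q M (int l) * (1 - q powi (M - int l)) / (1 - q ^ Suc l)"
  unfolding qbinom_nat_index by simp

lemma qbinom_Suc_shift:
  "qbinom q M (int (Suc l)) = (1 - q powi M) / (1 - q ^ Suc l) * qbinom q (M - 1) (int l)"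
proof -
  have "(\<Prod>t<Suc l. 1 - q powi (M - int t)) = (1 - q powi M) * (\<Prod>t<l. 1 - q powi (M - 1 - int t))"
    unfolding prod.lessThan_Suc_shift by (simp add: algebra_simps)
  then show ?thesis
    unfolding qbinom_nat_index by (simp add: prod.lessThan_Suc)
qed

lemma qbinom_eq_0: "0 \<le> M \<Longrightarrow> M < int l \<Longrightarrow> qbinom q M (int l) = 0"
  unfolding qbinom_nat_index by (auto intro!: prod_zero bexI[of _ "nat M"])

declare qfib.simps [simp del]

lemma qfib_initial: "n < k \<Longrightarrow> qfib k Q x n = x ^ n"
  by (simp add: qfib.simps)

lemma qfib_recurrence:
  "1 \<le> k \<Longrightarrow> k \<le> n \<Longrightarrow> qfib k Q x n = x * qfib k Q x (n - 1) + Q ^ (n - k) * qfib k Q x (n - k)"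
  by (subst qfib.simps) simp

locale generic_q =
  fixes q :: "'a::field"
  assumes nonzero: "q \<noteq> 0"
    and not_root_of_unity: "n > 0 \<Longrightarrow> q ^ n \<noteq> 1"
begin

lemma powi_add: "q powi (a + b) = q powi a * q powi b"
  using nonzero by (simp add: power_int_add)

lemma one_minus_power_nonzero: "1 - q ^ Suc n \<noteq> 0"
  using not_root_of_unity[of "Suc n"] by simp

text \<open>
  With an integer lower index the Pascal rules also hold at the boundary j \<le> 0, thanks to the
  convention that the q-binomial vanishes for negative j; this avoids case splits in the sums below.
\<close>

lemma qbinom_pascal: "qbinom q M j = qbinom q (M - 1) j + q powi (M - j) * qbinom q (M - 1) (j - 1)"
proof (cases "j \<le> 0")
  case True
  then show ?thesis by (cases "j = 0") auto
next
  case False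
  define l where "l = nat (j - 1)"
  have j: "j = int (Suc l)" using False unfolding l_def by simp
  have step: "qbinom q (M - 1) j = qbinom q (M - 1) (int l) * (1 - q powi (M - j)) / (1 - q ^ Suc l)"
    using qbinom_Suc[of q "M - 1" l] unfolding j by (simp add: diff_diff_eq)
  have "q powi M = q powi (M - j) * q ^ Suc l"
    using powi_add[of "M - j" j] unfolding j power_int_of_nat by simp
  then have split: "1 - q powi M = (1 - q powi (M - j)) + q powi (M - j) * (1 - q ^ Suc l)"
    by (simp add: algebra_simps)
  have "qbinom q M j = (1 - q powi M) / (1 - q ^ Suc l) * qbinom q (M - 1) (int l)"
    unfolding j by (rule qbinom_Suc_shift)
  also have "\<dots> = qbinom q (M - 1) (int l) * (1 - q powi (M - j)) / (1 - q ^ Suc l)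
      + q powi (M - j) * qbinom q (M - 1) (int l)"
    unfolding split using one_minus_power_nonzero[of l] by (simp add: field_simps)
  also have "\<dots> = qbinom q (M - 1) j + q powi (M - j) * qbinom q (M - 1) (j - 1)"
    unfolding step by (simp add: j)
  finally show ?thesis .
qed

lemma qbinom_pascal': "qbinom q M j = q powi j * qbinom q (M - 1) j + qbinom q (M - 1) (j - 1)"
proof (cases "j \<le> 0")
  case True
  then show ?thesis by (cases "j = 0") auto
next
  case False
  define l where "l = nat (j - 1)"
  have j: "j = int (Suc l)" using False unfolding l_def by simp
  have step: "qbinom q (M - 1) j = qbinom q (M - 1) (int l) * (1 - q powi (M - j)) / (1 - q ^ Suc l)"
    using qbinom_Suc[of q "M - 1" l] unfolding j by (simp add: diff_diff_eq)
  have qj: "q powi j = q ^ Suc l"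
    by (simp only: j power_int_of_nat)
  have "q powi M = q powi (M - j) * q ^ Suc l"
    using powi_add[of "M - j" j] unfolding j power_int_of_nat by simp
  then have split: "1 - q powi M = q ^ Suc l * (1 - q powi (M - j)) + (1 - q ^ Suc l)"
    by (simp add: algebra_simps)
  have "qbinom q M j = (1 - q powi M) / (1 - q ^ Suc l) * qbinom q (M - 1) (int l)"
    unfolding j by (rule qbinom_Suc_shift)
  also have "\<dots> = q ^ Suc l * (qbinom q (M - 1) (int l) * (1 - q powi (M - j)) / (1 - q ^ Suc l))
      + qbinom q (M - 1) (int l)"
    unfolding split using one_minus_power_nonzero[of l] by (simp add: field_simps)
  also have "\<dots> = q powi j * qbinom q (M - 1) j + qbinom q (M - 1) (j - 1)"
    unfolding step qj using j by simp
  finally show ?thesis .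
qed

lemma qbinom_negate:
  "qbinom q (A + int l) (int l)
     = (-1) ^ l * q powi ((A + 1) * int l + triangular l) * qbinom q (- A - 1) (int l)"
proof (induction l)
  case 0
  show ?case by simp
next
  case (Suc l)
  have sign: "1 - q powi (A + 1 + int l) = - (q powi (A + 1 + int l)) * (1 - q powi (- A - 1 - int l))"
    using powi_add[of "A + 1 + int l" "- A - 1 - int l"] by (simp add: algebra_simps)
  have exponent: "q powi ((A + 1) * int (Suc l) + triangular (Suc l))
      = q powi ((A + 1) * int l + triangular l) * q powi (A + 1 + int l)"
    unfolding powi_add[symmetric] by (simp add: algebra_simps)
  have "qbinom q (A + int (Suc l)) (int (Suc l))
      = (1 - q powi (A + 1 + int l)) / (1 - q ^ Suc l) * qbinom q (A + int l) (int l)"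
    using qbinom_Suc_shift[of q "A + int (Suc l)" l] by (simp add: algebra_simps)
  also have "\<dots> = (-1) ^ Suc l * q powi ((A + 1) * int (Suc l) + triangular (Suc l))
      * (qbinom q (- A - 1) (int l) * (1 - q powi (- A - 1 - int l)) / (1 - q ^ Suc l))"
    unfolding Suc.IH sign exponent by (simp add: algebra_simps)
  also have "\<dots> = (-1) ^ Suc l * q powi ((A + 1) * int (Suc l) + triangular (Suc l))
      * qbinom q (- A - 1) (int (Suc l))"
    unfolding qbinom_Suc by (simp add: diff_diff_eq)
  finally show ?case .
qed

definition qvandermonde_sum :: "int \<Rightarrow> int \<Rightarrow> nat \<Rightarrow> 'a" where
  "qvandermonde_sum a b N
     = (\<Sum>l\<le>N. qbinom q a (int N - int l) * qbinom q b (int l) * q powi (int l * (a - int N + int l)))"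

lemma qvandermonde_sum_0: "qvandermonde_sum a b 0 = 1"
  by (simp add: qvandermonde_sum_def)

lemma qvandermonde_sum_zero_left: "qvandermonde_sum 0 b N = qbinom q b (int N)"
proof -
  have "qvandermonde_sum 0 b N = (\<Sum>l\<le>N. if l = N then qbinom q b (int N) else 0)"
    unfolding qvandermonde_sum_def by (rule sum.cong) (auto simp: qbinom_eq_0 simp flip: of_nat_diff)
  then show ?thesis by simp
qed

lemma qvandermonde_sum_Suc:
  "qvandermonde_sum (a + 1) b (Suc N) = q ^ Suc N * qvandermonde_sum a b (Suc N) + qvandermonde_sum a b N"
proof -
  have summand: "qbinom q (a + 1) (int (Suc N) - int l) * qbinom q b (int l)
        * q powi (int l * (a + 1 - int (Suc N) + int l))
      = q ^ Suc N * (qbinom q a (int (Suc N) - int l) * qbinom q b (int l)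
        * q powi (int l * (a - int (Suc N) + int l)))
      + qbinom q a (int N - int l) * qbinom q b (int l) * q powi (int l * (a - int N + int l))"
    for l
  proof -
    have "q powi (int (Suc N) - int l) * q powi (int l * (a - int N + int l))
        = q powi (int (Suc N) + int l * (a - int (Suc N) + int l))"
      unfolding powi_add[symmetric] by (rule arg_cong[where f = "power_int q"]) (simp add: algebra_simps)
    also have "\<dots> = q ^ Suc N * q powi (int l * (a - int (Suc N) + int l))"
      unfolding powi_add power_int_of_nat ..
    finally show ?thesis
      using qbinom_pascal'[of "a + 1" "int (Suc N) - int l"] by (simp add: algebra_simps)
  qed
  have "qvandermonde_sum (a + 1) b (Suc N) = q ^ Suc N * qvandermonde_sum a b (Suc N)
      + (\<Sum>l\<le>Suc N. qbinom q a (int N - int l) * qbinom q b (int l) * q powi (int l * (a - int N + int l)))"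
    unfolding qvandermonde_sum_def summand sum.distrib sum_distrib_left ..
  also have "(\<Sum>l\<le>Suc N. qbinom q a (int N - int l) * qbinom q b (int l)
      * q powi (int l * (a - int N + int l))) = qvandermonde_sum a b N"
    unfolding qvandermonde_sum_def by simp
  finally show ?thesis .
qed

lemma qbinom_vandermonde: "qbinom q (a + b) (int N) = qvandermonde_sum a b N"
proof (induction a arbitrary: N rule: int_induct[where k = 0])
  case base
  show ?case
    by (simp add: qvandermonde_sum_zero_left)
next
  case (step1 i)
  show ?case
  proof (cases N)
    case 0
    then show ?thesis by (simp add: qvandermonde_sum_0)
  next
    case (Suc N')
    have "qbinom q (i + 1 + b) (int (Suc N'))
        = q ^ Suc N' * qbinom q (i + b) (int (Suc N')) + qbinom q (i + b) (int N')"
      using qbinom_pascal'[of "i + 1 + b" "int (Suc N')", unfolded power_int_of_nat]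
      by (simp add: algebra_simps)
    then show ?thesis
      unfolding Suc qvandermonde_sum_Suc step1.IH .
  qed
next
  case (step2 i)
  show ?case
  proof (induction N)
    case 0
    show ?case by (simp add: qvandermonde_sum_0)
  next
    case (Suc N)
    have "qbinom q (i + b) (int (Suc N))
        = q ^ Suc N * qbinom q (i - 1 + b) (int (Suc N)) + qbinom q (i - 1 + b) (int N)"
      using qbinom_pascal'[of "i + b" "int (Suc N)", unfolded power_int_of_nat]
      by (simp add: algebra_simps)
    moreover have "qvandermonde_sum i b (Suc N)
        = q ^ Suc N * qvandermonde_sum (i - 1) b (Suc N) + qvandermonde_sum (i - 1) b N"
      using qvandermonde_sum_Suc[of "i - 1" b N] by simp
    ultimately have "q ^ Suc N * qbinom q (i - 1 + b) (int (Suc N))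
        = q ^ Suc N * qvandermonde_sum (i - 1) b (Suc N)"
      using step2.IH[of "Suc N"] Suc.IH by simp
    then show ?case
      using nonzero by simp
  qed
qed

lemma qbinom_vandermonde_negated:
  "(\<Sum>l\<le>N. qbinom q a (int N - int l) * qbinom q (A + int l) (int l) * (-1) ^ l
      * q powi (triangular l + int l * (a - int N - A)))
     = qbinom q (a - A - 1) (int N)"
proof -
  have summand: "qbinom q a (int N - int l) * qbinom q (A + int l) (int l) * (-1) ^ l
        * q powi (triangular l + int l * (a - int N - A))
      = qbinom q a (int N - int l) * qbinom q (- A - 1) (int l) * q powi (int l * (a - int N + int l))"
    for l
  proof -
    have "q powi ((A + 1) * int l + triangular l) * q powi (triangular l + int l * (a - int N - A))
        = q powi (int l * (a - int N + int l))"
      unfolding powi_add[symmetric] using two_triangular[of l]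
      by (intro arg_cong[where f = "power_int q"]) (simp add: algebra_simps)
    moreover have "(-1) ^ l * (-1) ^ l = (1 :: 'a)"
      by (simp flip: power_add add: power_even_eq[symmetric])
    ultimately show ?thesis
      unfolding qbinom_negate by (simp add: algebra_simps)
  qed
  have "qbinom q (a - A - 1) (int N) = qbinom q (a + (- A - 1)) (int N)"
    by (rule arg_cong[where f = "\<lambda>M. qbinom q M (int N)"]) simp
  also have "\<dots> = (\<Sum>l\<le>N. qbinom q a (int N - int l) * qbinom q (- A - 1) (int l)
      * q powi (int l * (a - int N + int l)))"
    unfolding qbinom_vandermonde qvandermonde_sum_def ..
  finally show ?thesis
    unfolding summand by simp
qed

definition qfib_coeff :: "nat \<Rightarrow> nat \<Rightarrow> nat \<Rightarrow> 'a" where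
  "qfib_coeff k n l = q powi (int k * triangular l) * qbinom q (int n - (int k - 1) * int l) (int l)"

lemma qfib_coeff_0 [simp]: "qfib_coeff k n 0 = 1"
  by (simp add: qfib_coeff_def)

lemma qfib_coeff_Suc:
  assumes "1 \<le> k" and "k \<le> n"
  shows "qfib_coeff k n (Suc l) = qfib_coeff k (n - 1) (Suc l) + q ^ (n - k) * qfib_coeff k (n - k) l"
proof -
  define M where "M = int n - (int k - 1) * int (Suc l)"
  have M_n1: "M - 1 = int (n - 1) - (int k - 1) * int (Suc l)"
    and M_nk: "M - 1 = int (n - k) - (int k - 1) * int l"
    using assms by (simp_all add: M_def of_nat_diff algebra_simps)
  have "q powi (int k * triangular (Suc l)) * q powi (M - int (Suc l))
      = q powi (int (n - k) + int k * triangular l)"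
    unfolding powi_add[symmetric] using assms
    by (intro arg_cong[where f = "power_int q"]) (simp add: M_def of_nat_diff algebra_simps)
  then have exponent: "q powi (int k * triangular (Suc l)) * q powi (M - int (Suc l))
      = q ^ (n - k) * q powi (int k * triangular l)"
    unfolding powi_add power_int_of_nat .
  have "qfib_coeff k n (Suc l) = q powi (int k * triangular (Suc l)) * qbinom q M (int (Suc l))"
    unfolding qfib_coeff_def M_def ..
  also have "\<dots> = q powi (int k * triangular (Suc l)) * qbinom q (M - 1) (int (Suc l))
      + (q powi (int k * triangular (Suc l)) * q powi (M - int (Suc l))) * qbinom q (M - 1) (int l)"
    unfolding qbinom_pascal[of M "int (Suc l)"] by (simp add: algebra_simps)
  also have "\<dots> = qfib_coeff k (n - 1) (Suc l) + q ^ (n - k) * qfib_coeff k (n - k) l"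
    unfolding exponent qfib_coeff_def M_n1[symmetric] M_nk[symmetric] by (simp add: algebra_simps)
  finally show ?thesis .
qed

lemma qfib_coeff_eq_0: "1 \<le> k \<Longrightarrow> 1 \<le> l \<Longrightarrow> qfib_coeff k (k * l - 1) l = 0"
  using qbinom_eq_0[of "int l - 1" l q]
  by (simp add: qfib_coeff_def of_nat_diff algebra_simps)

lemma qfib_coeff_sum_extend:
  assumes k: "1 \<le> k"
  shows "(\<Sum>l\<le>(n - 1) div k. smult (qfib_coeff k (n - 1) l) (x ^ (n - k * l)))
       = (\<Sum>l\<le>n div k. smult (qfib_coeff k (n - 1) l) (x ^ (n - k * l)))"
proof (rule sum.mono_neutral_left)
  show "\<forall>l\<in>{..n div k} - {..(n - 1) div k}. smult (qfib_coeff k (n - 1) l) (x ^ (n - k * l)) = 0"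
  proof
    fix l assume "l \<in> {..n div k} - {..(n - 1) div k}"
    then have "n - 1 < k * l" and "k * l \<le> n"
      using k div_less_iff_less_mult[of k "n - 1" l] less_eq_div_iff_mult_less_eq[of k l n]
      by (auto simp: mult.commute)
    then have "n = k * l" and "1 \<le> l"
      by (linarith, cases l) auto
    then show "smult (qfib_coeff k (n - 1) l) (x ^ (n - k * l)) = 0"
      using qfib_coeff_eq_0[OF k] by simp
  qed
qed (auto intro: div_le_mono)

lemma qfib_explicit:
  assumes k: "1 \<le> k"
  shows "qfib k [:q:] x n = (\<Sum>l\<le>n div k. smult (qfib_coeff k n l) (x ^ (n - k * l)))"
proof (induction n rule: less_induct)
  case (less n)
  show ?case
  proof (cases "n < k")
    case True
    then show ?thesis by (simp add: qfib_initial)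
  next
    case False
    then have n: "k \<le> n" by simp
    have IH_1: "qfib k [:q:] x (n - 1) = (\<Sum>l\<le>(n - 1) div k. smult (qfib_coeff k (n - 1) l) (x ^ (n - 1 - k * l)))"
      and IH_k: "qfib k [:q:] x (n - k) = (\<Sum>l\<le>(n - k) div k. smult (qfib_coeff k (n - k) l) (x ^ (n - k - k * l)))"
      using less.IH[of "n - 1"] less.IH[of "n - k"] k n by simp_all
    define d where "d = n div k - 1"
    have n_div: "n div k = Suc d" and nk_div: "(n - k) div k = d"
      using n k le_div_geq[of k n] by (simp_all add: d_def div_greater_zero_iff)
    have bound: "k * l \<le> m" if "l \<le> m div k" for l m
      using that k less_eq_div_iff_mult_less_eq[of k l m] by (simp add: mult.commute)
    have "x * qfib k [:q:] x (n - 1) = (\<Sum>l\<le>(n - 1) div k. smult (qfib_coeff k (n - 1) l) (x ^ (n - k * l)))"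
      unfolding IH_1 sum_distrib_left
    proof (rule sum.cong[OF refl])
      fix l assume "l \<in> {..(n - 1) div k}"
      then have "n - k * l = Suc (n - 1 - k * l)"
        using bound[of l "n - 1"] k n by auto
      then show "x * smult (qfib_coeff k (n - 1) l) (x ^ (n - 1 - k * l))
          = smult (qfib_coeff k (n - 1) l) (x ^ (n - k * l))"
        by (simp only: power_Suc mult_smult_right)
    qed
    also have "\<dots> = (\<Sum>l\<le>n div k. smult (qfib_coeff k (n - 1) l) (x ^ (n - k * l)))"
      by (rule qfib_coeff_sum_extend[OF k])
    finally have shifted: "x * qfib k [:q:] x (n - 1)
        = smult (qfib_coeff k (n - 1) 0) (x ^ n)
          + (\<Sum>l\<le>d. smult (qfib_coeff k (n - 1) (Suc l)) (x ^ (n - k * Suc l)))"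
      unfolding n_div sum.atMost_Suc_shift by simp
    have dropped: "[:q:] ^ (n - k) * qfib k [:q:] x (n - k)
        = (\<Sum>l\<le>d. smult (q ^ (n - k) * qfib_coeff k (n - k) l) (x ^ (n - k * Suc l)))"
      unfolding IH_k nk_div poly_const_pow sum_distrib_left using k n
      by (intro sum.cong refl) (simp add: algebra_simps diff_diff_add)
    have "(\<Sum>l\<le>n div k. smult (qfib_coeff k n l) (x ^ (n - k * l)))
        = smult (qfib_coeff k n 0) (x ^ n) + (\<Sum>l\<le>d. smult (qfib_coeff k n (Suc l)) (x ^ (n - k * Suc l)))"
      unfolding n_div sum.atMost_Suc_shift by simp
    also have "\<dots> = x * qfib k [:q:] x (n - 1) + [:q:] ^ (n - k) * qfib k [:q:] x (n - k)"
      unfolding shifted dropped qfib_coeff_Suc[OF k n] smult_add_left sum.distrib by simp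
    also have "\<dots> = qfib k [:q:] x n"
      by (rule qfib_recurrence[OF k n, symmetric])
    finally show ?thesis ..
  qed
qed

text \<open>
  The weights \<omega> of the kernel vector are qfib_weight k 1; the shift s = 0 absorbs the factor
  q^((k-1)j) in the second summand of the matrix entries.
\<close>

definition qfib_weight :: "nat \<Rightarrow> nat \<Rightarrow> nat \<Rightarrow> 'a" where
  "qfib_weight k s j = (-1) ^ j * q powi (- (int k - 1) * triangular (j + s))"

lemma qfib_weight_shift: "1 \<le> k \<Longrightarrow> q ^ ((k - 1) * j) * qfib_weight k 1 j = qfib_weight k 0 j"
  unfolding qfib_weight_def power_int_of_nat[symmetric] powi_add[symmetric] mult.left_commute[of "q powi _"]
  by (intro arg_cong2[where f = "(*)"] arg_cong[where f = "power_int q"] refl)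
    (simp add: of_nat_diff algebra_simps)

lemma qfib_weight_Suc: "qfib_weight k 0 (Suc t) = - qfib_weight k 1 t"
  by (simp add: qfib_weight_def)

lemma qfib_transform_coeff:
  assumes t: "t \<le> N" and a: "a = int N + int r - (int k - 1) * int s"
  shows "(\<Sum>l\<le>N - t. qbinom q a (int N - int (t + l)) * qfib_weight k s (t + l)
            * qfib_coeff k (k * (t + l) + r) l)
       = qfib_weight k s t * qbinom q (a - int k * int t - int r - 1) (int (N - t))"
proof -
  define A where "A = int k * int t + int r"
  have summand: "qbinom q a (int N - int (t + l)) * qfib_weight k s (t + l) * qfib_coeff k (k * (t + l) + r) l
      = qfib_weight k s t * (qbinom q a (int (N - t) - int l) * qbinom q (A + int l) (int l) * (-1) ^ l
          * q powi (triangular l + int l * (a - int (N - t) - A)))" for l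
  proof -
    have exponent: "q powi (- (int k - 1) * triangular (t + l + s)) * q powi (int k * triangular l)
        = q powi (- (int k - 1) * triangular (t + s)) * q powi (triangular l + int l * (a - int (N - t) - A))"
      unfolding powi_add[symmetric] using t
      by (intro arg_cong[where f = "power_int q"]) (simp add: a A_def triangular_add of_nat_diff algebra_simps)
    have "int (k * (t + l) + r) - (int k - 1) * int l = A + int l"
      by (simp add: A_def algebra_simps)
    then have coeff: "qfib_coeff k (k * (t + l) + r) l
        = q powi (int k * triangular l) * qbinom q (A + int l) (int l)"
      unfolding qfib_coeff_def by simp
    have weight: "qfib_weight k s (t + l)
        = (-1) ^ t * (-1) ^ l * q powi (- (int k - 1) * triangular (t + l + s))"
      unfolding qfib_weight_def power_add ..
    have index: "int N - int (t + l) = int (N - t) - int l"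
      using t by simp
    have "qbinom q a (int N - int (t + l)) * qfib_weight k s (t + l) * qfib_coeff k (k * (t + l) + r) l
        = (-1) ^ t * (-1) ^ l * qbinom q a (int (N - t) - int l) * qbinom q (A + int l) (int l)
          * (q powi (- (int k - 1) * triangular (t + l + s)) * q powi (int k * triangular l))"
      unfolding coeff weight index by (simp only: mult_ac)
    then show ?thesis
      unfolding exponent qfib_weight_def by (simp only: mult_ac)
  qed
  have top: "a - int k * int t - int r - 1 = a - A - 1"
    by (simp add: A_def)
  show ?thesis
    unfolding summand sum_distrib_left[symmetric] qbinom_vandermonde_negated top ..
qed

text \<open>
  The constraint on a makes the exponent of q match the negated Vandermonde identity for every
  power x^(kt+r) at once.
\<close>

lemma qfib_transform:
  assumes k: "1 \<le> k" and r: "r < k" and a: "a = int N + int r - (int k - 1) * int s"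
  shows "(\<Sum>j\<le>N. smult (qbinom q a (int N - int j) * qfib_weight k s j) (qfib k [:q:] x (k * j + r)))
       = (\<Sum>t\<le>N. smult (qfib_weight k s t * qbinom q (a - int k * int t - int r - 1) (int (N - t)))
            (x ^ (k * t + r)))"
proof -
  have expand: "qfib k [:q:] x (k * j + r)
      = (\<Sum>l\<le>j. smult (qfib_coeff k (k * j + r) l) (x ^ (k * (j - l) + r)))" for j
  proof -
    have "(k * j + r) div k = j"
      using r by simp
    moreover have "k * j + r - k * l = k * (j - l) + r" if "l \<le> j" for l
      using that by (simp add: diff_mult_distrib2)
    ultimately show ?thesis
      unfolding qfib_explicit[OF k] by (intro sum.cong) auto
  qed
  have "(\<Sum>j\<le>N. smult (qbinom q a (int N - int j) * qfib_weight k s j) (qfib k [:q:] x (k * j + r)))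
      = (\<Sum>j\<le>N. \<Sum>l\<le>j. smult (qbinom q a (int N - int j) * qfib_weight k s j
          * qfib_coeff k (k * j + r) l) (x ^ (k * (j - l) + r)))"
    unfolding expand by (simp add: smult_sum_right ac_simps)
  also have "\<dots> = (\<Sum>t\<le>N. \<Sum>l\<le>N - t. smult (qbinom q a (int N - int (t + l)) * qfib_weight k s (t + l)
          * qfib_coeff k (k * (t + l) + r) l) (x ^ (k * t + r)))"
    unfolding sum_atMost_triangle_reindex by simp
  also have "\<dots> = (\<Sum>t\<le>N. smult (qfib_weight k s t * qbinom q (a - int k * int t - int r - 1) (int (N - t)))
            (x ^ (k * t + r)))"
    unfolding smult_sum[symmetric] using qfib_transform_coeff[OF _ a] by (intro sum.cong refl) auto
  finally show ?thesis .
qed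

definition qfib_det_entry :: "nat \<Rightarrow> nat \<Rightarrow> 'a poly \<Rightarrow> nat \<Rightarrow> nat \<Rightarrow> 'a poly" where
  "qfib_det_entry k r x i j = [: qbinom q (int i - int k + int r + 1) (int i - int j) :] * x ^ k
     + [: q ^ ((k - 1) * j) * qbinom q (int i + int r + 1) (int i - int j + 1) :]"

lemma qfib_det_row_kernel:
  assumes k: "1 \<le> k" and r: "r < k"
  shows "(\<Sum>j\<le>Suc i. qfib_det_entry k r x i j * smult (qfib_weight k 1 j) (qfib k [:q:] x (k * j + r))) = 0"
proof -
  define F where "F j = qfib k [:q:] x (k * j + r)" for j
  define P where "P = (\<Sum>t\<le>i. smult (qfib_weight k 1 t * qbinom q (int i - int k * int (Suc t)) (int (i - t)))
      (x ^ (k * t + r)))"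
  have x_power_part: "(\<Sum>j\<le>Suc i. smult (qbinom q (int i - int k + int r + 1) (int i - int j) * qfib_weight k 1 j) (F j)) = P"
  proof -
    have "(\<Sum>j\<le>Suc i. smult (qbinom q (int i - int k + int r + 1) (int i - int j) * qfib_weight k 1 j) (F j))
        = (\<Sum>j\<le>i. smult (qbinom q (int i + int r - (int k - 1) * int 1) (int i - int j) * qfib_weight k 1 j) (F j))"
      by (simp add: algebra_simps)
    also have "\<dots> = P"
      unfolding F_def P_def qfib_transform[OF k r refl] by (intro sum.cong refl) (simp add: algebra_simps)
    finally show ?thesis .
  qed
  have constant_part: "(\<Sum>j\<le>Suc i. smult (q ^ ((k - 1) * j) * qbinom q (int i + int r + 1) (int i - int j + 1)
      * qfib_weight k 1 j) (F j)) = - (x ^ k * P)"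
  proof -
    have "(\<Sum>j\<le>Suc i. smult (q ^ ((k - 1) * j) * qbinom q (int i + int r + 1) (int i - int j + 1)
          * qfib_weight k 1 j) (F j))
        = (\<Sum>j\<le>Suc i. smult (qbinom q (int (Suc i) + int r - (int k - 1) * int 0) (int (Suc i) - int j)
          * qfib_weight k 0 j) (F j))"
      by (intro sum.cong refl) (simp add: qfib_weight_shift[OF k, symmetric] algebra_simps)
    also have "\<dots> = (\<Sum>t\<le>Suc i. smult (qfib_weight k 0 t * qbinom q (int i - int k * int t) (int (Suc i - t)))
        (x ^ (k * t + r)))"
      unfolding F_def qfib_transform[OF k r refl] by (intro sum.cong refl) (simp add: algebra_simps)
    also have "\<dots> = (\<Sum>t\<le>i. smult (qfib_weight k 0 (Suc t) * qbinom q (int i - int k * int (Suc t)) (int (i - t)))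
        (x ^ (k * Suc t + r)))"
      unfolding sum.atMost_Suc_shift using qbinom_eq_0[of "int i" "Suc i" q] by simp
    also have "\<dots> = - (x ^ k * P)"
      unfolding P_def qfib_weight_Suc sum_distrib_left sum_negf[symmetric]
      by (intro sum.cong refl) (simp add: power_add mult_smult_right mult.assoc)
    finally show ?thesis .
  qed
  have "(\<Sum>j\<le>Suc i. qfib_det_entry k r x i j * smult (qfib_weight k 1 j) (F j))
      = x ^ k * (\<Sum>j\<le>Suc i. smult (qbinom q (int i - int k + int r + 1) (int i - int j) * qfib_weight k 1 j) (F j))
        + (\<Sum>j\<le>Suc i. smult (q ^ ((k - 1) * j) * qbinom q (int i + int r + 1) (int i - int j + 1)
          * qfib_weight k 1 j) (F j))"
    unfolding qfib_det_entry_def sum_distrib_left sum.distrib[symmetric]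
    by (intro sum.cong refl) (simp add: algebra_simps mult_smult_right)
  also have "\<dots> = 0"
    unfolding x_power_part constant_part by simp
  finally show ?thesis
    unfolding F_def .
qed

lemma qfib_det_entry_superdiag: "qfib_det_entry k r x i (Suc i) = [: q ^ ((k - 1) * Suc i) :]"
  by (simp add: qfib_det_entry_def)

lemma qfib_weight_superdiag_prod:
  assumes k: "1 \<le> k"
  shows "(-1) ^ n * qfib_weight k 1 n * (\<Prod>i<n. q ^ ((k - 1) * Suc i)) = 1"
proof (induction n)
  case 0
  show ?case by (simp add: qfib_weight_def)
next
  case (Suc n)
  have "q powi (- (int k - 1) * triangular (Suc n + 1))
      = q powi (- (int k - 1) * triangular (n + 1)) * q powi (- (int k - 1) * int (Suc n))"
    unfolding powi_add[symmetric] by (rule arg_cong[where f = "power_int q"]) (simp add: algebra_simps)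
  then have weight: "qfib_weight k 1 (Suc n) = - qfib_weight k 1 n * q powi (- (int k - 1) * int (Suc n))"
    unfolding qfib_weight_def by simp
  have "int ((k - 1) * Suc n) = (int k - 1) * int (Suc n)"
    by (simp only: of_nat_mult of_nat_diff[OF k] of_nat_1)
  then have exponent: "- (int k - 1) * int (Suc n) + int ((k - 1) * Suc n) = 0"
    by (simp add: algebra_simps)
  have "q powi (- (int k - 1) * int (Suc n)) * q ^ ((k - 1) * Suc n)
      = q powi (- (int k - 1) * int (Suc n) + int ((k - 1) * Suc n))"
    unfolding powi_add power_int_of_nat ..
  then have cancel: "q powi (- (int k - 1) * int (Suc n)) * q ^ ((k - 1) * Suc n) = 1"
    unfolding exponent by simp
  have "(-1) ^ Suc n * qfib_weight k 1 (Suc n) * (\<Prod>i<Suc n. q ^ ((k - 1) * Suc i))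
      = ((-1) ^ n * qfib_weight k 1 n * (\<Prod>i<n. q ^ ((k - 1) * Suc i)))
        * (q powi (- (int k - 1) * int (Suc n)) * q ^ ((k - 1) * Suc n))"
    unfolding weight by (simp only: prod.lessThan_Suc power_Suc mult_minus_left mult_minus_right minus_minus mult_1_left mult_ac)
  then show ?case
    unfolding Suc.IH cancel by simp
qed

end

lemma qq_nonzero: "qq \<noteq> 0"
  unfolding qq_def Zero_fract_def by (simp add: eq_fract)

lemma qq_power: "qq ^ n = Fract ([:0, 1:] ^ n) 1"
  by (induction n) (auto simp: qq_def mult_fract One_fract_def)

lemma qq_not_root_of_unity: "n > 0 \<Longrightarrow> qq ^ n \<noteq> 1"
proof
  assume n: "n > 0" and "qq ^ n = 1"
  then have "Fract ([:0, 1:] ^ n) 1 = Fract (1 :: rat poly) 1"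
    by (simp add: qq_power One_fract_def)
  then have "([:0, 1:] :: rat poly) ^ n = 1"
    by (simp add: eq_fract)
  then show False
    using n degree_linear_power[of "0 :: rat" n] by simp
qed

interpretation qq: generic_q qq
  using qq_nonzero qq_not_root_of_unity by unfold_locales

theorem theorem6:
  fixes k r n :: nat
  assumes "k \<ge> 1" and "r < k" and "n \<ge> 1"
  shows "xx ^ r * det (mat n n (\<lambda>(i, j).
            [: qbinom qq (int i - int k + int r + 1) (int i - int j) :] * xx ^ k
          + [: qq ^ ((k - 1) * j) * qbinom qq (int i + int r + 1) (int i - int j + 1) :]))
         = qfib k [: qq :] xx (k * n + r)"
proof -
  define w where "w j = smult (qq.qfib_weight k 1 j) (qfib k [:qq:] xx (k * j + r))" for j
  have "w 0 * det (mat n n (\<lambda>(i, j). qq.qfib_det_entry k r xx i j))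
      = (-1) ^ n * w n * (\<Prod>i<n. qq.qfib_det_entry k r xx i (Suc i))"
    using qq.qfib_det_row_kernel[OF assms(1,2)]
    by (intro det_hessenberg_kernel) (auto simp: qq.qfib_det_entry_def w_def)
  moreover have "w 0 = xx ^ r"
    using assms by (simp add: w_def qq.qfib_weight_def qfib_initial)
  moreover have "(-1) ^ n * w n * (\<Prod>i<n. qq.qfib_det_entry k r xx i (Suc i)) = qfib k [:qq:] xx (k * n + r)"
  proof -
    have "((-1) ^ n :: rat poly fract poly) = [: (-1) ^ n :]"
      by (induction n) auto
    then show ?thesis
      unfolding w_def qq.qfib_det_entry_superdiag prod_to_poly
      using qq.qfib_weight_superdiag_prod[OF assms(1), of n] by (simp add: ac_simps)
  qed
  ultimately show ?thesis
    unfolding qq.qfib_det_entry_def by simp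
qed

end
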